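(* Let $\mathcal{H}=(V,E)$ be a hypergraph and let $\mathbf{v}^*$ be an optimal solution of the linear program: minimize $\sum_{x\in V}v_x$ subject to $\sum_{x\in e}v_x\ge1$ for all $e\in E$ and $v_x\ge0$ for all $x\in V$. Consider the linear program: maximize $\sum_{x\in V}\psi_x$ subject to $\sum_{x\in e}\psi_x\le 1$ for every $e\in E$ with $\sum_{x\in e}v^*_x=1$, $\psi_x\le 0$ for every $x$ with $v^*_x=0$, and $\psi_x\ge0$ for all $x\in V$. Then $\mathbf{v}^*$ is an optimal solution of the second linear program. *)

theory Defs
  imports Complex_Main
begin

definition hypergraph :: "'a set \<Rightarrow> 'a set set \<Rightarrow> bool" where
  "hypergraph V E \<longleftrightarrow> finite V \<and> (\<forall>e\<in>E. e \<subseteq> V)"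

definition lp1_feasible :: "'a set \<Rightarrow> 'a set set \<Rightarrow> ('a \<Rightarrow> real) \<Rightarrow> bool" where
  "lp1_feasible V E v \<longleftrightarrow> (\<forall>e\<in>E. (\<Sum>x\<in>e. v x) \<ge> 1) \<and> (\<forall>x\<in>V. v x \<ge> 0)"

definition lp1_optimal :: "'a set \<Rightarrow> 'a set set \<Rightarrow> ('a \<Rightarrow> real) \<Rightarrow> bool" where
  "lp1_optimal V E v \<longleftrightarrow> lp1_feasible V E v \<and>
     (\<forall>w. lp1_feasible V E w \<longrightarrow> (\<Sum>x\<in>V. v x) \<le> (\<Sum>x\<in>V. w x))"

definition lp2_feasible :: "'a set \<Rightarrow> 'a set set \<Rightarrow> ('a \<Rightarrow> real) \<Rightarrow> ('a \<Rightarrow> real) \<Rightarrow> bool" where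
  "lp2_feasible V E vs \<psi> \<longleftrightarrow>
     (\<forall>e\<in>E. (\<Sum>x\<in>e. vs x) = 1 \<longrightarrow> (\<Sum>x\<in>e. \<psi> x) \<le> 1) \<and>
     (\<forall>x\<in>V. vs x = 0 \<longrightarrow> \<psi> x \<le> 0) \<and>
     (\<forall>x\<in>V. \<psi> x \<ge> 0)"

definition lp2_optimal :: "'a set \<Rightarrow> 'a set set \<Rightarrow> ('a \<Rightarrow> real) \<Rightarrow> ('a \<Rightarrow> real) \<Rightarrow> bool" where
  "lp2_optimal V E vs \<psi> \<longleftrightarrow> lp2_feasible V E vs \<psi> \<and>
     (\<forall>\<phi>. lp2_feasible V E vs \<phi> \<longrightarrow> (\<Sum>x\<in>V. \<phi> x) \<le> (\<Sum>x\<in>V. \<psi> x))"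

end

theory Submission
  imports Defs
begin

text \<open>If \<open>\<phi>\<close> were feasible for the second LP with a larger objective than \<open>v\<^sup>*\<close>, then moving
  slightly from \<open>v\<^sup>*\<close> away from \<open>\<phi>\<close>, to \<open>v\<^sup>* + \<epsilon> (v\<^sup>* - \<phi>)\<close>, would stay feasible for the first LP and
  decrease its objective. Feasibility is checked constraint by constraint: slack constraints
  stay satisfied for small \<open>\<epsilon>\<close> by continuity, a tight edge stays covered because \<open>\<phi>\<close> has sum
  at most 1 on it, and a vertex with \<open>v\<^sup>*\<^sub>x = 0\<close> has \<open>\<phi>\<^sub>x = 0\<close>.\<close>

lemma finite_edges_if_hypergraph:
  assumes "hypergraph V E"
  shows "finite E"
proof -
  have "E \<subseteq> Pow V" using assms by (auto simp: hypergraph_def)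
  then show ?thesis using assms by (auto simp: hypergraph_def intro: finite_subset)
qed

lemma eventually_at_right_0_perturbation_gt:
  fixes a b c :: real
  assumes "c < a"
  shows "\<forall>\<^sub>F \<epsilon> in at_right 0. c < a + \<epsilon> * (a - b)"
proof -
  have "((\<lambda>\<epsilon>. a + \<epsilon> * (a - b)) \<longlongrightarrow> a + 0 * (a - b)) (at_right 0)"
    by (intro tendsto_intros)
  then show ?thesis using assms by (auto dest: order_tendstoD(1))
qed

lemma sum_perturbation:
  fixes v \<phi> :: "'a \<Rightarrow> real"
  shows "(\<Sum>x\<in>A. v x + \<epsilon> * (v x - \<phi> x)) = sum v A + \<epsilon> * (sum v A - sum \<phi> A)"
  by (simp add: sum.distrib sum_subtractf flip: sum_distrib_left)

lemma lp2_feasible_self: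
  assumes "lp1_feasible V E v"
  shows "lp2_feasible V E v v"
  using assms by (auto simp: lp1_feasible_def lp2_feasible_def)

lemma eventually_lp1_feasible_perturbation:
  assumes "finite V" "finite E"
    and v: "lp1_feasible V E v"
    and \<phi>: "lp2_feasible V E v \<phi>"
  shows "\<forall>\<^sub>F \<epsilon> in at_right 0. lp1_feasible V E (\<lambda>x. v x + \<epsilon> * (v x - \<phi> x))"
proof -
  have edges: "\<forall>\<^sub>F \<epsilon> in at_right 0. \<forall>e\<in>E. 1 \<le> (\<Sum>x\<in>e. v x + \<epsilon> * (v x - \<phi> x))"
  proof (rule eventually_ball_finite[OF \<open>finite E\<close>], intro ballI)
    fix e assume "e \<in> E"
    then have covered: "1 \<le> sum v e" using v by (auto simp: lp1_feasible_def)
    show "\<forall>\<^sub>F \<epsilon> in at_right 0. 1 \<le> (\<Sum>x\<in>e. v x + \<epsilon> * (v x - \<phi> x))"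
    proof (cases "sum v e = 1")
      case True
      then have "sum \<phi> e \<le> 1" using \<phi> \<open>e \<in> E\<close> by (auto simp: lp2_feasible_def)
      then have "\<forall>\<^sub>F \<epsilon> in at_right 0. 1 \<le> sum v e + \<epsilon> * (sum v e - sum \<phi> e)"
        using True eventually_at_right_less[of 0] by (auto elim!: eventually_mono)
      then show ?thesis by (simp add: sum_perturbation)
    next
      case False
      with covered have "\<forall>\<^sub>F \<epsilon> in at_right 0. 1 < sum v e + \<epsilon> * (sum v e - sum \<phi> e)"
        by (intro eventually_at_right_0_perturbation_gt) simp
      then show ?thesis by (auto simp: sum_perturbation elim: eventually_mono)
    qed
  qed
  have vertices: "\<forall>\<^sub>F \<epsilon> in at_right 0. \<forall>x\<in>V. 0 \<le> v x + \<epsilon> * (v x - \<phi> x)"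
  proof (rule eventually_ball_finite[OF \<open>finite V\<close>], intro ballI)
    fix x assume "x \<in> V"
    show "\<forall>\<^sub>F \<epsilon> in at_right 0. 0 \<le> v x + \<epsilon> * (v x - \<phi> x)"
    proof (cases "v x = 0")
      case True
      then have "\<phi> x = 0" using \<phi> \<open>x \<in> V\<close> by (force simp: lp2_feasible_def)
      with True show ?thesis by simp
    next
      case False
      then have "0 < v x" using v \<open>x \<in> V\<close> by (force simp: lp1_feasible_def)
      then have "\<forall>\<^sub>F \<epsilon> in at_right 0. 0 < v x + \<epsilon> * (v x - \<phi> x)"
        by (rule eventually_at_right_0_perturbation_gt)
      then show ?thesis by (auto elim: eventually_mono)
    qed
  qed
  from eventually_conj[OF edges vertices] show ?thesis
    by (simp add: lp1_feasible_def)
qed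

lemma lp2_objective_le_lp1_optimum:
  assumes "finite V" "finite E"
    and v: "lp1_optimal V E v"
    and \<phi>: "lp2_feasible V E v \<phi>"
  shows "sum \<phi> V \<le> sum v V"
proof -
  have "\<forall>\<^sub>F \<epsilon> in at_right 0. 0 < \<epsilon> \<and> lp1_feasible V E (\<lambda>x. v x + \<epsilon> * (v x - \<phi> x))"
    using v \<phi> \<open>finite V\<close> \<open>finite E\<close>
    by (intro eventually_conj eventually_lp1_feasible_perturbation)
      (auto simp: eventually_at_right_less lp1_optimal_def)
  then obtain \<epsilon> :: real
    where "0 < \<epsilon>" and feasible: "lp1_feasible V E (\<lambda>x. v x + \<epsilon> * (v x - \<phi> x))"
    using eventually_happens by fastforce
  from v feasible have "sum v V \<le> sum v V + \<epsilon> * (sum v V - sum \<phi> V)"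
    by (auto simp: lp1_optimal_def sum_perturbation)
  with \<open>0 < \<epsilon>\<close> show ?thesis
    by (simp add: zero_le_mult_iff)
qed

theorem lemmaF1:
  fixes V :: "'a set" and E :: "'a set set" and vs :: "'a \<Rightarrow> real"
  assumes "hypergraph V E"
    and "lp1_optimal V E vs"
  shows "lp2_optimal V E vs vs"
proof -
  have "finite V" "finite E"
    using assms(1) finite_edges_if_hypergraph by (auto simp: hypergraph_def)
  with assms(2) show ?thesis
    by (auto simp: lp2_optimal_def lp1_optimal_def lp2_feasible_self
        intro: lp2_objective_le_lp1_optimum)
qed

end
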